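(* Let $\varphi : X \to X$ be a morphism in $\mathscr{C}$ and let $\lambda : X \to L$ be a cokernel of $\varphi$. Then $\varphi$ has a dual core inverse if and only if $\varphi$ has a kernel $\kappa : K \to X$ such that both $\kappa\lambda : K \to L$ and $\varphi^{3}\varphi^{*}+\lambda\lambda^{*} : X \to X$ are invertible. In this case, $$\varphi_{\mathrm{core}}=\varphi^{*}(\varphi^{3}\varphi^{*}+\lambda\lambda^{*})^{-1}\varphi^{2}.$$
   Context: $\mathscr{C}$ is an additive category with an involution $*$: a map on morphisms sending $\varphi : X\to Y$ to $\varphi^* : Y \to X$ such that $(\varphi^* )^*=\varphi$, $(\varphi\psi)^*=\psi^*\varphi^*$ and $(\varphi+\phi)^*=\varphi^*+\phi^*$. Composition is written left to right: for $\varphi : X\to Y$ and $\psi : Y\to Z$, $\varphi\psi : X \to Z$ means "first $\varphi$, then $\psi$". A kernel of $\varphi : X\to Y$ is a morphism $\kappa : K\to X$ with $\kappa\varphi=0$ such that every $\alpha : M\to X$ with $\alpha\varphi=0$ factors uniquely as $\alpha=\alpha'\kappa$. A cokernel of $\varphi$ is a morphism $\lambda : Y\to L$ with $\varphi\lambda=0$ such that every $\beta : Y\to M$ with $\varphi\beta=0$ factors uniquely as $\beta=\lambda\beta'$. A morphism is invertible if it has a two-sided inverse. For $\varphi : X\to X$, a dual core inverse of $\varphi$ is a morphism $\chi : X\to X$ with $(\chi\varphi)^*=\chi\varphi$, $\chi^2\varphi=\chi$ and $\varphi^2\chi=\varphi$. It is unique when it exists and is denoted $\varphi_{\mathrm{core}}$.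 *)

theory Defs
  imports Main
begin

text \<open>A (small or large) category presented by a set of objects, a set of arrows,
  domain/codomain maps, composition written in diagrammatic order
  (Cmp f g = "first f, then g"), identities, zero morphisms, addition of
  parallel morphisms and an involution Star.\<close>

record ('o, 'm) icat =
  Obj  :: "'o set"
  Arr  :: "'m set"
  Dom  :: "'m \<Rightarrow> 'o"
  Cod  :: "'m \<Rightarrow> 'o"
  Cmp  :: "'m \<Rightarrow> 'm \<Rightarrow> 'm"
  Idm  :: "'o \<Rightarrow> 'm"
  Zero :: "'o \<Rightarrow> 'o \<Rightarrow> 'm"
  Add  :: "'m \<Rightarrow> 'm \<Rightarrow> 'm"
  Star :: "'m \<Rightarrow> 'm"

definition Hom :: "('o, 'm, 'x) icat_scheme \<Rightarrow> 'o \<Rightarrow> 'o \<Rightarrow> 'm set" where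
  "Hom C X Y = {f \<in> Arr C. Dom C f = X \<and> Cod C f = Y}"

definition is_category :: "('o, 'm, 'x) icat_scheme \<Rightarrow> bool" where
  "is_category C \<longleftrightarrow>
     (\<forall>f \<in> Arr C. Dom C f \<in> Obj C \<and> Cod C f \<in> Obj C) \<and>
     (\<forall>X \<in> Obj C. Idm C X \<in> Hom C X X) \<and>
     (\<forall>f \<in> Arr C. \<forall>g \<in> Arr C. Cod C f = Dom C g \<longrightarrow>
        Cmp C f g \<in> Hom C (Dom C f) (Cod C g)) \<and>
     (\<forall>f \<in> Arr C. \<forall>g \<in> Arr C. \<forall>h \<in> Arr C. Cod C f = Dom C g \<longrightarrow> Cod C g = Dom C h \<longrightarrow>
        Cmp C (Cmp C f g) h = Cmp C f (Cmp C g h)) \<and>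
     (\<forall>f \<in> Arr C. Cmp C (Idm C (Dom C f)) f = f \<and> Cmp C f (Idm C (Cod C f)) = f)"

definition is_preadditive :: "('o, 'm, 'x) icat_scheme \<Rightarrow> bool" where
  "is_preadditive C \<longleftrightarrow> is_category C \<and>
     (\<forall>X \<in> Obj C. \<forall>Y \<in> Obj C.
        Zero C X Y \<in> Hom C X Y \<and>
        (\<forall>f \<in> Hom C X Y. \<forall>g \<in> Hom C X Y. Add C f g \<in> Hom C X Y) \<and>
        (\<forall>f \<in> Hom C X Y. \<forall>g \<in> Hom C X Y. \<forall>h \<in> Hom C X Y.
           Add C (Add C f g) h = Add C f (Add C g h)) \<and>
        (\<forall>f \<in> Hom C X Y. \<forall>g \<in> Hom C X Y. Add C f g = Add C g f) \<and>
        (\<forall>f \<in> Hom C X Y. Add C f (Zero C X Y) = f) \<and>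
        (\<forall>f \<in> Hom C X Y. \<exists>g \<in> Hom C X Y. Add C f g = Zero C X Y)) \<and>
     (\<forall>f \<in> Arr C. \<forall>g \<in> Arr C. \<forall>h \<in> Arr C.
        Dom C f = Dom C g \<longrightarrow> Cod C f = Cod C g \<longrightarrow> Cod C f = Dom C h \<longrightarrow>
        Cmp C (Add C f g) h = Add C (Cmp C f h) (Cmp C g h)) \<and>
     (\<forall>f \<in> Arr C. \<forall>g \<in> Arr C. \<forall>h \<in> Arr C.
        Dom C f = Dom C g \<longrightarrow> Cod C f = Cod C g \<longrightarrow> Cod C h = Dom C f \<longrightarrow>
        Cmp C h (Add C f g) = Add C (Cmp C h f) (Cmp C h g))"

definition is_additive :: "('o, 'm, 'x) icat_scheme \<Rightarrow> bool" where
  "is_additive C \<longleftrightarrow> is_preadditive C \<and>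
     (\<exists>Z \<in> Obj C. \<forall>X \<in> Obj C. (\<exists>!f. f \<in> Hom C Z X) \<and> (\<exists>!f. f \<in> Hom C X Z)) \<and>
     (\<forall>X \<in> Obj C. \<forall>Y \<in> Obj C. \<exists>P \<in> Obj C. \<exists>i1 \<in> Hom C X P. \<exists>i2 \<in> Hom C Y P.
        \<exists>p1 \<in> Hom C P X. \<exists>p2 \<in> Hom C P Y.
          Cmp C i1 p1 = Idm C X \<and> Cmp C i2 p2 = Idm C Y \<and>
          Cmp C i1 p2 = Zero C X Y \<and> Cmp C i2 p1 = Zero C Y X \<and>
          Add C (Cmp C p1 i1) (Cmp C p2 i2) = Idm C P)"

definition is_additive_inv_cat :: "('o, 'm, 'x) icat_scheme \<Rightarrow> bool" where
  "is_additive_inv_cat C \<longleftrightarrow> is_additive C \<and>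
     (\<forall>f \<in> Arr C. Star C f \<in> Hom C (Cod C f) (Dom C f) \<and> Star C (Star C f) = f) \<and>
     (\<forall>f \<in> Arr C. \<forall>g \<in> Arr C. Cod C f = Dom C g \<longrightarrow>
        Star C (Cmp C f g) = Cmp C (Star C g) (Star C f)) \<and>
     (\<forall>f \<in> Arr C. \<forall>g \<in> Arr C. Dom C f = Dom C g \<longrightarrow> Cod C f = Cod C g \<longrightarrow>
        Star C (Add C f g) = Add C (Star C f) (Star C g))"

definition is_kernel :: "('o, 'm, 'x) icat_scheme \<Rightarrow> 'm \<Rightarrow> 'm \<Rightarrow> bool" where
  "is_kernel C \<kappa> \<phi> \<longleftrightarrow> \<kappa> \<in> Arr C \<and> Cod C \<kappa> = Dom C \<phi> \<and>
     Cmp C \<kappa> \<phi> = Zero C (Dom C \<kappa>) (Cod C \<phi>) \<and>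
     (\<forall>\<alpha> \<in> Arr C. Cod C \<alpha> = Dom C \<phi> \<longrightarrow> Cmp C \<alpha> \<phi> = Zero C (Dom C \<alpha>) (Cod C \<phi>) \<longrightarrow>
        (\<exists>!\<alpha>'. \<alpha>' \<in> Hom C (Dom C \<alpha>) (Dom C \<kappa>) \<and> \<alpha> = Cmp C \<alpha>' \<kappa>))"

definition is_cokernel :: "('o, 'm, 'x) icat_scheme \<Rightarrow> 'm \<Rightarrow> 'm \<Rightarrow> bool" where
  "is_cokernel C lam \<phi> \<longleftrightarrow> lam \<in> Arr C \<and> Dom C lam = Cod C \<phi> \<and>
     Cmp C \<phi> lam = Zero C (Dom C \<phi>) (Cod C lam) \<and>
     (\<forall>\<beta> \<in> Arr C. Dom C \<beta> = Cod C \<phi> \<longrightarrow> Cmp C \<phi> \<beta> = Zero C (Dom C \<phi>) (Cod C \<beta>) \<longrightarrow>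
        (\<exists>!\<beta>'. \<beta>' \<in> Hom C (Cod C lam) (Cod C \<beta>) \<and> \<beta> = Cmp C lam \<beta>'))"

definition is_inverse :: "('o, 'm, 'x) icat_scheme \<Rightarrow> 'm \<Rightarrow> 'm \<Rightarrow> bool" where
  "is_inverse C f g \<longleftrightarrow> f \<in> Arr C \<and> g \<in> Hom C (Cod C f) (Dom C f) \<and>
     Cmp C f g = Idm C (Dom C f) \<and> Cmp C g f = Idm C (Cod C f)"

definition invertible :: "('o, 'm, 'x) icat_scheme \<Rightarrow> 'm \<Rightarrow> bool" where
  "invertible C f \<longleftrightarrow> (\<exists>g. is_inverse C f g)"

definition inverse_of :: "('o, 'm, 'x) icat_scheme \<Rightarrow> 'm \<Rightarrow> 'm" where
  "inverse_of C f = (THE g. is_inverse C f g)"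

definition is_dual_core_inverse :: "('o, 'm, 'x) icat_scheme \<Rightarrow> 'm \<Rightarrow> 'm \<Rightarrow> bool" where
  "is_dual_core_inverse C \<chi> \<phi> \<longleftrightarrow> \<chi> \<in> Hom C (Dom C \<phi>) (Dom C \<phi>) \<and>
     Star C (Cmp C \<chi> \<phi>) = Cmp C \<chi> \<phi> \<and>
     Cmp C (Cmp C \<chi> \<chi>) \<phi> = \<chi> \<and>
     Cmp C (Cmp C \<phi> \<phi>) \<chi> = \<phi>"

definition dual_core :: "('o, 'm, 'x) icat_scheme \<Rightarrow> 'm \<Rightarrow> 'm" where
  "dual_core C \<phi> = (THE \<chi>. is_dual_core_inverse C \<chi> \<phi>)"

end

theory Submission
  imports Defs
begin

text \<open>Write \<open>a\<close> for \<open>\<phi>\<close>, composition diagrammatically, and \<open>u = a\<^sup>3 a\<^sup>* + \<lambda> \<lambda>\<^sup>*\<close>.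
  If \<open>x\<close> is a dual core inverse, then \<open>a (1 - a x) = 0\<close>, so \<open>1 - a x = \<lambda> b\<close> for some \<open>b\<close>;
  the splitting \<open>a x + \<lambda> b = 1\<close> makes \<open>b\<close> a kernel of \<open>a\<close> with \<open>b \<lambda> = 1\<close>, and
  \<open>x\<^sup>* x\<^sup>3 + b\<^sup>* b\<close> is an inverse of \<open>u\<close>.
  Conversely, let \<open>k\<close> be a kernel with \<open>k \<lambda>\<close> invertible (inverse \<open>s\<close>). Any \<open>f\<close> with
  \<open>a f = 0\<close> and \<open>k f = 0\<close> vanishes, since \<open>f\<close> factors through the cokernel \<open>\<lambda>\<close> and \<open>k \<lambda>\<close>
  is invertible; this identifies \<open>a\<^sup>2 a\<^sup>* u\<^sup>-\<^sup>1 a + \<lambda> s k\<close> with \<open>1\<close>, which yields the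
  equations for \<open>a\<^sup>* u\<^sup>-\<^sup>1 a\<^sup>2\<close>, while \<open>a\<^sup>* u\<^sup>-\<^sup>1 \<lambda> = 0\<close> makes \<open>a\<^sup>* u\<^sup>-\<^sup>1 a\<^sup>3\<close> self-adjoint.\<close>

locale additive_inv_cat =
  fixes C :: "('o, 'm) icat"
  assumes additive_inv_cat: "is_additive_inv_cat C"
begin

abbreviation cmp (infixr "\<cdot>" 70) where "f \<cdot> g \<equiv> Cmp C f g"
abbreviation add (infixl "\<oplus>" 65) where "f \<oplus> g \<equiv> Add C f g"
abbreviation star ("_\<^sup>\<dagger>" [1000] 1000) where "f\<^sup>\<dagger> \<equiv> Star C f"

lemma category: "is_category C"
  using additive_inv_cat unfolding is_additive_inv_cat_def is_additive_def is_preadditive_def by blast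

lemma preadditive: "is_preadditive C"
  using additive_inv_cat unfolding is_additive_inv_cat_def is_additive_def by blast

lemma HomD: "f \<in> Hom C A B \<Longrightarrow> f \<in> Arr C \<and> Dom C f = A \<and> Cod C f = B"
  unfolding Hom_def by blast

lemma dom_obj [simp]: "f \<in> Arr C \<Longrightarrow> Dom C f \<in> Obj C"
  and cod_obj [simp]: "f \<in> Arr C \<Longrightarrow> Cod C f \<in> Obj C"
  using category unfolding is_category_def by blast+

lemma cmp_hom: "f \<in> Arr C \<Longrightarrow> g \<in> Arr C \<Longrightarrow> Cod C f = Dom C g \<Longrightarrow> f\<cdot>g \<in> Hom C (Dom C f) (Cod C g)"
  using category unfolding is_category_def by blast

lemma cmp_arr [simp]: "f \<in> Arr C \<Longrightarrow> g \<in> Arr C \<Longrightarrow> Cod C f = Dom C g \<Longrightarrow> f\<cdot>g \<in> Arr C"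
  and cmp_dom [simp]: "f \<in> Arr C \<Longrightarrow> g \<in> Arr C \<Longrightarrow> Cod C f = Dom C g \<Longrightarrow> Dom C (f\<cdot>g) = Dom C f"
  and cmp_cod [simp]: "f \<in> Arr C \<Longrightarrow> g \<in> Arr C \<Longrightarrow> Cod C f = Dom C g \<Longrightarrow> Cod C (f\<cdot>g) = Cod C g"
  using cmp_hom HomD by blast+

lemma cmp_assoc [simp]:
  "f \<in> Arr C \<Longrightarrow> g \<in> Arr C \<Longrightarrow> h \<in> Arr C \<Longrightarrow> Cod C f = Dom C g \<Longrightarrow> Cod C g = Dom C h \<Longrightarrow>
    (f\<cdot>g)\<cdot>h = f\<cdot>g\<cdot>h"
  using category unfolding is_category_def by blast

text \<open>Simp normalises composites to right-nested form; this turns an equation \<open>f\<cdot>g = h\<close>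
  into one that still applies inside a longer composite.\<close>

lemma cmp_eq_extend:
  assumes "f\<cdot>g = h" "f \<in> Arr C" "g \<in> Arr C" "Cod C f = Dom C g" "z \<in> Arr C" "Dom C z = Cod C g"
  shows "f\<cdot>g\<cdot>z = h\<cdot>z"
  using assms cmp_assoc[of f g z] by metis

lemma idm_arr [simp]: "A \<in> Obj C \<Longrightarrow> Idm C A \<in> Arr C"
  and idm_dom [simp]: "A \<in> Obj C \<Longrightarrow> Dom C (Idm C A) = A"
  and idm_cod [simp]: "A \<in> Obj C \<Longrightarrow> Cod C (Idm C A) = A"
  using category unfolding is_category_def Hom_def by blast+

lemma idm_cmp [simp]: "f \<in> Arr C \<Longrightarrow> Dom C f = A \<Longrightarrow> Idm C A\<cdot>f = f"
  and cmp_idm [simp]: "f \<in> Arr C \<Longrightarrow> Cod C f = A \<Longrightarrow> f\<cdot>Idm C A = f"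
  using category unfolding is_category_def by blast+

lemma hom_abelian_group:
  assumes "A \<in> Obj C" "B \<in> Obj C"
  shows "Zero C A B \<in> Hom C A B"
    and "f \<in> Hom C A B \<Longrightarrow> g \<in> Hom C A B \<Longrightarrow> f \<oplus> g \<in> Hom C A B"
    and "f \<in> Hom C A B \<Longrightarrow> g \<in> Hom C A B \<Longrightarrow> h \<in> Hom C A B \<Longrightarrow> f \<oplus> g \<oplus> h = f \<oplus> (g \<oplus> h)"
    and "f \<in> Hom C A B \<Longrightarrow> g \<in> Hom C A B \<Longrightarrow> f \<oplus> g = g \<oplus> f"
    and "f \<in> Hom C A B \<Longrightarrow> f \<oplus> Zero C A B = f"
    and "f \<in> Hom C A B \<Longrightarrow> \<exists>g \<in> Hom C A B. f \<oplus> g = Zero C A B"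
  using preadditive assms unfolding is_preadditive_def by blast+

lemma zero_arr [simp]: "A \<in> Obj C \<Longrightarrow> B \<in> Obj C \<Longrightarrow> Zero C A B \<in> Arr C"
  and zero_dom [simp]: "A \<in> Obj C \<Longrightarrow> B \<in> Obj C \<Longrightarrow> Dom C (Zero C A B) = A"
  and zero_cod [simp]: "A \<in> Obj C \<Longrightarrow> B \<in> Obj C \<Longrightarrow> Cod C (Zero C A B) = B"
  using hom_abelian_group(1) HomD by blast+

lemma add_hom:
  "f \<in> Arr C \<Longrightarrow> g \<in> Arr C \<Longrightarrow> Dom C f = Dom C g \<Longrightarrow> Cod C f = Cod C g \<Longrightarrow>
    f \<oplus> g \<in> Hom C (Dom C f) (Cod C f)"
  using hom_abelian_group(2)[of "Dom C f" "Cod C f" f g] unfolding Hom_def by simp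

lemma add_arr [simp]:
    "f \<in> Arr C \<Longrightarrow> g \<in> Arr C \<Longrightarrow> Dom C f = Dom C g \<Longrightarrow> Cod C f = Cod C g \<Longrightarrow> f \<oplus> g \<in> Arr C"
  and add_dom [simp]:
    "f \<in> Arr C \<Longrightarrow> g \<in> Arr C \<Longrightarrow> Dom C f = Dom C g \<Longrightarrow> Cod C f = Cod C g \<Longrightarrow> Dom C (f \<oplus> g) = Dom C f"
  and add_cod [simp]:
    "f \<in> Arr C \<Longrightarrow> g \<in> Arr C \<Longrightarrow> Dom C f = Dom C g \<Longrightarrow> Cod C f = Cod C g \<Longrightarrow> Cod C (f \<oplus> g) = Cod C f"
  using add_hom HomD by blast+

lemma add_assoc:
  "f \<in> Arr C \<Longrightarrow> g \<in> Arr C \<Longrightarrow> h \<in> Arr C \<Longrightarrow> Dom C g = Dom C f \<Longrightarrow> Cod C g = Cod C f \<Longrightarrow>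
    Dom C h = Dom C f \<Longrightarrow> Cod C h = Cod C f \<Longrightarrow> f \<oplus> g \<oplus> h = f \<oplus> (g \<oplus> h)"
  using hom_abelian_group(3)[of "Dom C f" "Cod C f" f g h] unfolding Hom_def by simp

lemma add_commute:
  "f \<in> Arr C \<Longrightarrow> g \<in> Arr C \<Longrightarrow> Dom C g = Dom C f \<Longrightarrow> Cod C g = Cod C f \<Longrightarrow> f \<oplus> g = g \<oplus> f"
  using hom_abelian_group(4)[of "Dom C f" "Cod C f" f g] unfolding Hom_def by simp

lemma add_zero [simp]: "f \<in> Arr C \<Longrightarrow> Dom C f = A \<Longrightarrow> Cod C f = B \<Longrightarrow> f \<oplus> Zero C A B = f"
  using hom_abelian_group(5)[of A B f] unfolding Hom_def by auto

lemma zero_add [simp]: "f \<in> Arr C \<Longrightarrow> Dom C f = A \<Longrightarrow> Cod C f = B \<Longrightarrow> Zero C A B \<oplus> f = f"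
  using add_commute add_zero by (metis dom_obj cod_obj zero_arr zero_dom zero_cod)

lemma add_inverseE:
  assumes "f \<in> Arr C"
  obtains n where "n \<in> Arr C" "Dom C n = Dom C f" "Cod C n = Cod C f" "f \<oplus> n = Zero C (Dom C f) (Cod C f)"
  using hom_abelian_group(6)[of "Dom C f" "Cod C f" f] assms unfolding Hom_def by auto

lemma cmp_add_distrib [simp]:
  "f \<in> Arr C \<Longrightarrow> g \<in> Arr C \<Longrightarrow> h \<in> Arr C \<Longrightarrow> Dom C f = Dom C g \<Longrightarrow> Cod C f = Cod C g \<Longrightarrow>
    Cod C f = Dom C h \<Longrightarrow> (f \<oplus> g)\<cdot>h = f\<cdot>h \<oplus> g\<cdot>h"
  and add_cmp_distrib [simp]:
  "f \<in> Arr C \<Longrightarrow> g \<in> Arr C \<Longrightarrow> h \<in> Arr C \<Longrightarrow> Dom C f = Dom C g \<Longrightarrow> Cod C f = Cod C g \<Longrightarrow>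
    Cod C h = Dom C f \<Longrightarrow> h\<cdot>(f \<oplus> g) = h\<cdot>f \<oplus> h\<cdot>g"
  using preadditive unfolding is_preadditive_def by blast+

lemma add_right_cancel:
  assumes "f \<in> Arr C" "g \<in> Arr C" "h \<in> Arr C" "Dom C g = Dom C f" "Cod C g = Cod C f"
    "Dom C h = Dom C f" "Cod C h = Cod C f" "f \<oplus> h = g \<oplus> h"
  shows "f = g"
proof -
  obtain n where n: "n \<in> Arr C" "Dom C n = Dom C h" "Cod C n = Cod C h"
    "h \<oplus> n = Zero C (Dom C h) (Cod C h)"
    using add_inverseE[OF assms(3)] by blast
  have "f = f \<oplus> (h \<oplus> n)" using assms n by simp
  also have "\<dots> = f \<oplus> h \<oplus> n" by (rule add_assoc[symmetric]) (use assms n in simp_all)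
  also have "\<dots> = g \<oplus> h \<oplus> n" by (simp only: assms(8))
  also have "\<dots> = g \<oplus> (h \<oplus> n)" by (rule add_assoc) (use assms n in simp_all)
  also have "\<dots> = g" using assms n by simp
  finally show ?thesis .
qed

lemma add_left_cancel:
  assumes "f \<in> Arr C" "g \<in> Arr C" "h \<in> Arr C" "Dom C g = Dom C f" "Cod C g = Cod C f"
    "Dom C h = Dom C f" "Cod C h = Cod C f" "h \<oplus> f = h \<oplus> g"
  shows "f = g"
proof (rule add_right_cancel[of f g h])
  have "f \<oplus> h = h \<oplus> f" by (rule add_commute) (use assms in simp_all)
  also have "\<dots> = h \<oplus> g" by (fact assms(8))
  also have "\<dots> = g \<oplus> h" by (rule add_commute) (use assms in simp_all)
  finally show "f \<oplus> h = g \<oplus> h" .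
qed (use assms in simp_all)

lemma add_eq_self_imp_zero:
  assumes "f \<in> Arr C" "g \<in> Arr C" "Dom C g = Dom C f" "Cod C g = Cod C f" "f \<oplus> g = f"
  shows "g = Zero C (Dom C f) (Cod C f)"
proof (rule add_left_cancel[of g _ f])
  show "f \<oplus> g = f \<oplus> Zero C (Dom C f) (Cod C f)" using assms(1,5) by simp
qed (use assms in simp_all)

lemma cmp_zero [simp]:
  assumes "f \<in> Arr C" "Cod C f = B" "D \<in> Obj C"
  shows "f\<cdot>Zero C B D = Zero C (Dom C f) D"
proof -
  have B: "B \<in> Obj C" using assms by auto
  have "f\<cdot>Zero C B D \<oplus> f\<cdot>Zero C B D = f\<cdot>(Zero C B D \<oplus> Zero C B D)"
    by (rule add_cmp_distrib[symmetric]) (use assms B in simp_all)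
  also have "\<dots> = f\<cdot>Zero C B D" using assms B by simp
  finally show ?thesis
    using add_eq_self_imp_zero[of "f\<cdot>Zero C B D" "f\<cdot>Zero C B D"] assms B by simp
qed

lemma zero_cmp [simp]:
  assumes "g \<in> Arr C" "Dom C g = B" "A \<in> Obj C"
  shows "Zero C A B\<cdot>g = Zero C A (Cod C g)"
proof -
  have B: "B \<in> Obj C" using assms by auto
  have "Zero C A B\<cdot>g \<oplus> Zero C A B\<cdot>g = (Zero C A B \<oplus> Zero C A B)\<cdot>g"
    by (rule cmp_add_distrib[symmetric]) (use assms B in simp_all)
  also have "\<dots> = Zero C A B\<cdot>g" using assms B by simp
  finally show ?thesis
    using add_eq_self_imp_zero[of "Zero C A B\<cdot>g" "Zero C A B\<cdot>g"] assms B by simp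
qed

lemma star_hom: "f \<in> Arr C \<Longrightarrow> f\<^sup>\<dagger> \<in> Hom C (Cod C f) (Dom C f)"
  using additive_inv_cat unfolding is_additive_inv_cat_def by blast

lemma star_arr [simp]: "f \<in> Arr C \<Longrightarrow> f\<^sup>\<dagger> \<in> Arr C"
  and star_dom [simp]: "f \<in> Arr C \<Longrightarrow> Dom C (f\<^sup>\<dagger>) = Cod C f"
  and star_cod [simp]: "f \<in> Arr C \<Longrightarrow> Cod C (f\<^sup>\<dagger>) = Dom C f"
  using star_hom HomD by blast+

lemma star_star [simp]: "f \<in> Arr C \<Longrightarrow> f\<^sup>\<dagger>\<^sup>\<dagger> = f"
  and star_cmp [simp]: "f \<in> Arr C \<Longrightarrow> g \<in> Arr C \<Longrightarrow> Cod C f = Dom C g \<Longrightarrow> (f\<cdot>g)\<^sup>\<dagger> = g\<^sup>\<dagger>\<cdot>f\<^sup>\<dagger>"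
  and star_add [simp]: "f \<in> Arr C \<Longrightarrow> g \<in> Arr C \<Longrightarrow> Dom C f = Dom C g \<Longrightarrow> Cod C f = Cod C g \<Longrightarrow>
    (f \<oplus> g)\<^sup>\<dagger> = f\<^sup>\<dagger> \<oplus> g\<^sup>\<dagger>"
  using additive_inv_cat unfolding is_additive_inv_cat_def by blast+

lemma star_zero [simp]:
  assumes "A \<in> Obj C" "B \<in> Obj C"
  shows "(Zero C A B)\<^sup>\<dagger> = Zero C B A"
proof -
  have "(Zero C A B)\<^sup>\<dagger> \<oplus> (Zero C A B)\<^sup>\<dagger> = (Zero C A B \<oplus> Zero C A B)\<^sup>\<dagger>"
    by (rule star_add[symmetric]) (use assms in simp_all)
  also have "\<dots> = (Zero C A B)\<^sup>\<dagger>" using assms by simp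
  finally show ?thesis
    using add_eq_self_imp_zero[of "(Zero C A B)\<^sup>\<dagger>" "(Zero C A B)\<^sup>\<dagger>"] assms by simp
qed

lemma star_idm [simp]: "A \<in> Obj C \<Longrightarrow> (Idm C A)\<^sup>\<dagger> = Idm C A"
  using star_cmp[of "(Idm C A)\<^sup>\<dagger>" "Idm C A"] by simp

lemma self_adjoint_if_cmp_star_eq:
  assumes "p \<in> Arr C" "Cod C p = Dom C p" "p\<cdot>p\<^sup>\<dagger> = p"
  shows "p\<^sup>\<dagger> = p"
proof -
  have "p\<^sup>\<dagger> = (p\<cdot>p\<^sup>\<dagger>)\<^sup>\<dagger>" using assms(3) by simp
  also have "\<dots> = p\<cdot>p\<^sup>\<dagger>" using assms(1,2) by simp
  finally show ?thesis using assms(3) by simp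
qed

lemma cokernelD:
  "is_cokernel C lam a \<Longrightarrow> lam \<in> Arr C \<and> Dom C lam = Cod C a \<and> a\<cdot>lam = Zero C (Dom C a) (Cod C lam)"
  unfolding is_cokernel_def by blast

lemma cokernel_universal:
  assumes "is_cokernel C lam a" "f \<in> Arr C" "Dom C f = Cod C a" "a\<cdot>f = Zero C (Dom C a) (Cod C f)"
  shows "\<exists>!f'. f' \<in> Hom C (Cod C lam) (Cod C f) \<and> f = lam\<cdot>f'"
  using assms unfolding is_cokernel_def by blast

lemma cokernel_epi:
  assumes "is_cokernel C lam a" "a \<in> Arr C" "f \<in> Arr C" "g \<in> Arr C" "Dom C f = Cod C lam"
    "Dom C g = Cod C lam" "Cod C g = Cod C f" "lam\<cdot>f = lam\<cdot>g"
  shows "f = g"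
proof -
  have lam: "lam \<in> Arr C" "Dom C lam = Cod C a" "a\<cdot>lam = Zero C (Dom C a) (Cod C lam)"
    using cokernelD[OF assms(1)] by auto
  have "a\<cdot>lam\<cdot>f = Zero C (Dom C a) (Cod C (lam\<cdot>f))"
    using cmp_eq_extend[OF lam(3)] lam assms by simp
  then have "\<exists>!f'. f' \<in> Hom C (Cod C lam) (Cod C (lam\<cdot>f)) \<and> lam\<cdot>f = lam\<cdot>f'"
    by (intro cokernel_universal[OF assms(1)]) (use lam assms in simp_all)
  moreover have "f \<in> Hom C (Cod C lam) (Cod C (lam\<cdot>f))" "g \<in> Hom C (Cod C lam) (Cod C (lam\<cdot>f))"
    using assms lam unfolding Hom_def by auto
  ultimately show ?thesis using assms(8) by blast
qed

lemma inverse_of_eqI: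
  assumes "is_inverse C f g"
  shows "inverse_of C f = g"
proof -
  have unique: "g' = g" if "is_inverse C f g'" for g'
  proof -
    have "f \<in> Arr C" "g \<in> Arr C" "g' \<in> Arr C" "Dom C g' = Cod C f" "Cod C g = Dom C f"
      "f\<cdot>g' = Idm C (Dom C f)" "g\<cdot>f = Idm C (Cod C f)"
      using assms that unfolding is_inverse_def Hom_def by auto
    then have "g' = (g\<cdot>f)\<cdot>g'" "g = g\<cdot>f\<cdot>g'" by simp_all
    then show ?thesis using \<open>f \<in> Arr C\<close> \<open>g \<in> Arr C\<close> \<open>g' \<in> Arr C\<close> \<open>Dom C g' = Cod C f\<close>
      \<open>Cod C g = Dom C f\<close> by simp
  qed
  show ?thesis unfolding inverse_of_def using assms unique by blast
qed

lemma inverse_of_hom: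
  assumes "invertible C f"
  shows "inverse_of C f \<in> Hom C (Cod C f) (Dom C f)"
  using assms inverse_of_eqI unfolding invertible_def is_inverse_def by auto

lemma dual_core_inverseD:
  assumes "a \<in> Hom C X X" "is_dual_core_inverse C x a"
  shows "x \<in> Hom C X X" "(x\<cdot>a)\<^sup>\<dagger> = x\<cdot>a" "x\<cdot>x\<cdot>a = x" "a\<cdot>a\<cdot>x = a"
proof -
  show x: "x \<in> Hom C X X"
    using assms HomD unfolding is_dual_core_inverse_def by fastforce
  have [simp]: "a \<in> Arr C" "Dom C a = X" "Cod C a = X" "x \<in> Arr C" "Dom C x = X" "Cod C x = X"
    using assms(1) x unfolding Hom_def by auto
  show "(x\<cdot>a)\<^sup>\<dagger> = x\<cdot>a" "x\<cdot>x\<cdot>a = x" "a\<cdot>a\<cdot>x = a"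
    using assms(2) unfolding is_dual_core_inverse_def by simp_all
qed

lemma dual_core_inverse_regular:
  assumes "a \<in> Hom C X X" "is_dual_core_inverse C x a"
  shows "a\<cdot>x\<cdot>a = a" "x\<cdot>a\<cdot>x = x"
proof -
  note x = dual_core_inverseD[OF assms]
  have [simp]: "a \<in> Arr C" "Dom C a = X" "Cod C a = X" "x \<in> Arr C" "Dom C x = X" "Cod C x = X"
    using assms(1) x(1) unfolding Hom_def by auto
  have "a\<cdot>x\<cdot>a = (a\<cdot>a\<cdot>x)\<cdot>x\<cdot>a" by (simp add: x)
  also have "\<dots> = a\<cdot>a\<cdot>(x\<cdot>x\<cdot>a)" by simp
  also have "\<dots> = a" by (simp add: x)
  finally show "a\<cdot>x\<cdot>a = a" .
  have "x\<cdot>a\<cdot>x = (x\<cdot>x\<cdot>a)\<cdot>a\<cdot>x" by (simp add: x)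
  also have "\<dots> = x\<cdot>x\<cdot>(a\<cdot>a\<cdot>x)" by simp
  also have "\<dots> = x" by (simp add: x)
  finally show "x\<cdot>a\<cdot>x = x" .
qed

lemma dual_core_inverse_unique:
  assumes a: "a \<in> Hom C X X" and x: "is_dual_core_inverse C x a" and z: "is_dual_core_inverse C z a"
  shows "x = z"
proof -
  note xD = dual_core_inverseD[OF a x] dual_core_inverse_regular[OF a x]
  note zD = dual_core_inverseD[OF a z] dual_core_inverse_regular[OF a z]
  have [simp]: "a \<in> Arr C" "Dom C a = X" "Cod C a = X" "x \<in> Arr C" "Dom C x = X" "Cod C x = X"
    "z \<in> Arr C" "Dom C z = X" "Cod C z = X"
    using a xD(1) zD(1) unfolding Hom_def by auto
  have xa_za: "x\<cdot>a = z\<cdot>a"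
  proof -
    have "x\<cdot>a = ((x\<cdot>a)\<cdot>(z\<cdot>a))\<^sup>\<dagger>" by (simp add: xD zD)
    also have "\<dots> = (z\<cdot>a)\<^sup>\<dagger>\<cdot>(x\<cdot>a)\<^sup>\<dagger>" by simp
    also have "\<dots> = z\<cdot>a" by (simp only: xD zD) (simp add: xD)
    finally show ?thesis .
  qed
  have ax_az: "a\<cdot>x = a\<cdot>z"
  proof -
    have "a\<cdot>x = a\<cdot>x\<cdot>x\<cdot>a" by (simp add: xD)
    also have "\<dots> = a\<cdot>x\<cdot>x\<cdot>a\<cdot>a\<cdot>z" by (simp add: zD)
    also have "\<dots> = a\<cdot>x\<cdot>a\<cdot>z" using cmp_eq_extend[OF xD(3), of "a\<cdot>z"] by simp
    also have "\<dots> = a\<cdot>z" using cmp_eq_extend[OF xD(5), of z] by simp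
    finally show ?thesis .
  qed
  have "x = x\<cdot>a\<cdot>z" using xD(6) by (simp add: ax_az)
  also have "\<dots> = z" using cmp_eq_extend[OF xa_za, of z] zD(6) by simp
  finally show ?thesis .
qed

lemma dual_core_eqI:
  "a \<in> Hom C X X \<Longrightarrow> is_dual_core_inverse C x a \<Longrightarrow> dual_core C a = x"
  unfolding dual_core_def using dual_core_inverse_unique by blast

lemma dual_core_inverse_annihilates:
  assumes a: "a \<in> Hom C X X" and x: "is_dual_core_inverse C x a"
    and "f \<in> Arr C" "Dom C f = X" "a\<cdot>f = Zero C X (Cod C f)"
  shows "x\<cdot>f = Zero C X (Cod C f)"
proof -
  note xD = dual_core_inverseD[OF a x]
  have [simp]: "a \<in> Arr C" "Dom C a = X" "Cod C a = X" "x \<in> Arr C" "Dom C x = X" "Cod C x = X"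
    using a xD(1) unfolding Hom_def by auto
  have "x\<cdot>f = (x\<cdot>x\<cdot>a)\<cdot>f" by (simp add: xD)
  also have "\<dots> = x\<cdot>x\<cdot>(a\<cdot>f)" using assms(3,4) by simp
  finally show ?thesis using assms(3-5) by simp
qed

lemma dual_core_inverse_complement:
  assumes a: "a \<in> Hom C X X" and lam: "lam \<in> Hom C X L" and ck: "is_cokernel C lam a"
    and x: "is_dual_core_inverse C x a"
  obtains b where "b \<in> Hom C L X" "a\<cdot>x \<oplus> lam\<cdot>b = Idm C X" "b\<cdot>a = Zero C L X" "b\<cdot>lam = Idm C L"
proof -
  note xD = dual_core_inverseD[OF a x] dual_core_inverse_regular[OF a x]
  have [simp]: "a \<in> Arr C" "Dom C a = X" "Cod C a = X" "x \<in> Arr C" "Dom C x = X" "Cod C x = X"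
    "lam \<in> Arr C" "Dom C lam = X" "Cod C lam = L"
    using a xD(1) lam unfolding Hom_def by auto
  have [simp]: "X \<in> Obj C" "L \<in> Obj C" using dom_obj[of a] cod_obj[of lam] by simp_all
  have a_lam: "a\<cdot>lam = Zero C X L" using cokernelD[OF ck] by simp
  have x_lam: "x\<cdot>lam = Zero C X L" using dual_core_inverse_annihilates[OF a x, of lam] a_lam by simp
  obtain n where n [simp]: "n \<in> Arr C" "Dom C n = X" "Cod C n = X" and ax_n: "a\<cdot>x \<oplus> n = Zero C X X"
    using add_inverseE[of "a\<cdot>x"] by auto
  have "a\<cdot>(Idm C X \<oplus> n) = a\<cdot>(a\<cdot>x \<oplus> n)" by (simp add: xD)
  also have "\<dots> = Zero C X X" by (simp only: ax_n) simp
  finally have "\<exists>!b. b \<in> Hom C L X \<and> Idm C X \<oplus> n = lam\<cdot>b"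
    using cokernel_universal[OF ck, of "Idm C X \<oplus> n"] by simp
  then obtain b where b: "b \<in> Hom C L X" and b_n: "Idm C X \<oplus> n = lam\<cdot>b" by blast
  have [simp]: "b \<in> Arr C" "Dom C b = L" "Cod C b = X" using b unfolding Hom_def by auto
  have split: "a\<cdot>x \<oplus> lam\<cdot>b = Idm C X"
  proof -
    have "a\<cdot>x \<oplus> lam\<cdot>b = (Idm C X \<oplus> n) \<oplus> a\<cdot>x"
      unfolding b_n by (rule add_commute) simp_all
    also have "\<dots> = Idm C X \<oplus> (n \<oplus> a\<cdot>x)" by (rule add_assoc) simp_all
    also have "n \<oplus> a\<cdot>x = a\<cdot>x \<oplus> n" by (rule add_commute) simp_all
    finally show ?thesis by (simp add: ax_n)
  qed
  have "a \<oplus> lam\<cdot>b\<cdot>a = (a\<cdot>x \<oplus> lam\<cdot>b)\<cdot>a" by (simp add: xD)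
  then have "lam\<cdot>b\<cdot>a = Zero C X X" using add_eq_self_imp_zero[of a "lam\<cdot>b\<cdot>a"] by (simp add: split)
  then have "b\<cdot>a = Zero C L X"
    by (intro cokernel_epi[OF ck, of "b\<cdot>a" "Zero C L X"]) simp_all
  moreover have "b\<cdot>lam = Idm C L"
  proof (rule cokernel_epi[OF ck])
    have "lam = (a\<cdot>x \<oplus> lam\<cdot>b)\<cdot>lam" by (simp add: split)
    also have "\<dots> = lam\<cdot>b\<cdot>lam" by (simp add: x_lam)
    finally show "lam\<cdot>(b\<cdot>lam) = lam\<cdot>Idm C L" by simp
  qed simp_all
  ultimately show ?thesis using that b split by blast
qed

lemma kernel_of_splitting:
  assumes a: "a \<in> Hom C X Y" and x: "x \<in> Hom C Y X" and lam: "lam \<in> Hom C X L"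
    and b: "b \<in> Hom C L X"
    and split: "a\<cdot>x \<oplus> lam\<cdot>b = Idm C X" and b_a: "b\<cdot>a = Zero C L Y" and b_lam: "b\<cdot>lam = Idm C L"
  shows "is_kernel C b a"
  unfolding is_kernel_def
proof (intro conjI ballI impI)
  have [simp]: "a \<in> Arr C" "Dom C a = X" "Cod C a = Y" "x \<in> Arr C" "Dom C x = Y" "Cod C x = X"
    "lam \<in> Arr C" "Dom C lam = X" "Cod C lam = L" "b \<in> Arr C" "Dom C b = L" "Cod C b = X"
    using a x lam b unfolding Hom_def by auto
  show "b \<in> Arr C" "Cod C b = Dom C a" "b\<cdot>a = Zero C (Dom C b) (Cod C a)" using b_a by simp_all
  fix \<alpha> assume \<alpha>: "\<alpha> \<in> Arr C" "Cod C \<alpha> = Dom C a" "\<alpha>\<cdot>a = Zero C (Dom C \<alpha>) (Cod C a)"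
  have [simp]: "Cod C \<alpha> = X" "Dom C \<alpha> \<in> Obj C" using \<alpha> by simp_all
  have "\<alpha> = \<alpha>\<cdot>(a\<cdot>x \<oplus> lam\<cdot>b)" using \<alpha> by (simp add: split)
  also have "\<dots> = \<alpha>\<cdot>lam\<cdot>b" using \<alpha> cmp_eq_extend[OF \<alpha>(3), of x] by simp
  finally have factor: "\<alpha> = (\<alpha>\<cdot>lam)\<cdot>b" using \<alpha> by simp
  show "\<exists>!\<alpha>'. \<alpha>' \<in> Hom C (Dom C \<alpha>) (Dom C b) \<and> \<alpha> = \<alpha>'\<cdot>b"
  proof
    show "\<alpha>\<cdot>lam \<in> Hom C (Dom C \<alpha>) (Dom C b) \<and> \<alpha> = (\<alpha>\<cdot>lam)\<cdot>b"
      using \<alpha> factor unfolding Hom_def by simp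
  next
    fix \<gamma> assume \<gamma>: "\<gamma> \<in> Hom C (Dom C \<alpha>) (Dom C b) \<and> \<alpha> = \<gamma>\<cdot>b"
    then have [simp]: "\<gamma> \<in> Arr C" "Cod C \<gamma> = L" unfolding Hom_def by simp_all
    have "\<alpha>\<cdot>lam = \<gamma>\<cdot>b\<cdot>lam" using \<gamma> by simp
    also have "\<dots> = \<gamma>" by (simp add: b_lam)
    finally show "\<gamma> = \<alpha>\<cdot>lam" by simp
  qed
qed

lemma dual_core_sum_invertible:
  assumes a: "a \<in> Hom C X X" and x: "is_dual_core_inverse C x a"
    and lam: "lam \<in> Hom C X L" and a_lam: "a\<cdot>lam = Zero C X L" and b: "b \<in> Hom C L X"
    and split: "a\<cdot>x \<oplus> lam\<cdot>b = Idm C X" and b_a: "b\<cdot>a = Zero C L X" and b_lam: "b\<cdot>lam = Idm C L"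
  shows "is_inverse C (a\<cdot>a\<cdot>a\<cdot>a\<^sup>\<dagger> \<oplus> lam\<cdot>lam\<^sup>\<dagger>) (x\<^sup>\<dagger>\<cdot>x\<cdot>x\<cdot>x \<oplus> b\<^sup>\<dagger>\<cdot>b)"
proof -
  note xD = dual_core_inverseD[OF a x] dual_core_inverse_regular[OF a x]
  have [simp]: "a \<in> Arr C" "Dom C a = X" "Cod C a = X" "x \<in> Arr C" "Dom C x = X" "Cod C x = X"
    "lam \<in> Arr C" "Dom C lam = X" "Cod C lam = L" "b \<in> Arr C" "Dom C b = L" "Cod C b = X"
    using a xD(1) lam b unfolding Hom_def by auto
  have [simp]: "X \<in> Obj C" "L \<in> Obj C" using dom_obj[of a] cod_obj[of lam] by simp_all
  have x_lam: "x\<cdot>lam = Zero C X L" using dual_core_inverse_annihilates[OF a x, of lam] a_lam by simp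
  have xa_star: "a\<^sup>\<dagger>\<cdot>x\<^sup>\<dagger> = x\<cdot>a" using xD(2) by simp
  have ba_star: "a\<^sup>\<dagger>\<cdot>b\<^sup>\<dagger> = Zero C X L" using arg_cong[OF b_a, of "Star C"] by simp
  have x_lam_star: "lam\<^sup>\<dagger>\<cdot>x\<^sup>\<dagger> = Zero C L X" using arg_cong[OF x_lam, of "Star C"] by simp
  have b_lam_star: "lam\<^sup>\<dagger>\<cdot>b\<^sup>\<dagger> = Idm C L" using arg_cong[OF b_lam, of "Star C"] by simp
  have x_a_star: "x\<cdot>a\<cdot>a\<^sup>\<dagger> = a\<^sup>\<dagger>"
  proof -
    have "a\<^sup>\<dagger>\<cdot>x\<^sup>\<dagger>\<cdot>a\<^sup>\<dagger> = a\<^sup>\<dagger>" using arg_cong[OF xD(5), of "Star C"] by simp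
    then show ?thesis using cmp_eq_extend[OF xa_star, of "a\<^sup>\<dagger>"] by simp
  qed
  have adjoint_X: "a\<^sup>\<dagger>\<cdot>x\<^sup>\<dagger>\<cdot>w = x\<cdot>a\<cdot>w" "lam\<^sup>\<dagger>\<cdot>x\<^sup>\<dagger>\<cdot>w = Zero C L (Cod C w)"
    if "w \<in> Arr C" "Dom C w = X" for w
    using cmp_eq_extend[OF xa_star, of w] cmp_eq_extend[OF x_lam_star, of w] that by simp_all
  have adjoint_L: "a\<^sup>\<dagger>\<cdot>b\<^sup>\<dagger>\<cdot>w = Zero C X (Cod C w)" "lam\<^sup>\<dagger>\<cdot>b\<^sup>\<dagger>\<cdot>w = w"
    if "w \<in> Arr C" "Dom C w = L" for w
    using cmp_eq_extend[OF ba_star, of w] cmp_eq_extend[OF b_lam_star, of w] that by simp_all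
  have "(a\<cdot>a\<cdot>a\<cdot>a\<^sup>\<dagger> \<oplus> lam\<cdot>lam\<^sup>\<dagger>)\<cdot>(x\<^sup>\<dagger>\<cdot>x\<cdot>x\<cdot>x \<oplus> b\<^sup>\<dagger>\<cdot>b) = a\<cdot>x \<oplus> lam\<cdot>b"
    using cmp_eq_extend[OF xD(5), of "x\<cdot>x\<cdot>x"] cmp_eq_extend[OF xD(4), of "x\<cdot>x"]
      cmp_eq_extend[OF xD(4), of x] by (simp add: adjoint_X adjoint_L)
  moreover have "(x\<^sup>\<dagger>\<cdot>x\<cdot>x\<cdot>x \<oplus> b\<^sup>\<dagger>\<cdot>b)\<cdot>(a\<cdot>a\<cdot>a\<cdot>a\<^sup>\<dagger> \<oplus> lam\<cdot>lam\<^sup>\<dagger>) = (a\<cdot>x \<oplus> lam\<cdot>b)\<^sup>\<dagger>"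
    using cmp_eq_extend[OF xD(3), of "a\<cdot>a\<cdot>a\<^sup>\<dagger>"] cmp_eq_extend[OF xD(3), of "a\<cdot>a\<^sup>\<dagger>"]
      cmp_eq_extend[OF x_lam, of "lam\<^sup>\<dagger>"] cmp_eq_extend[OF b_a, of "a\<cdot>a\<cdot>a\<^sup>\<dagger>"]
      cmp_eq_extend[OF b_lam, of "lam\<^sup>\<dagger>"] by (simp add: x_a_star)
  ultimately show ?thesis unfolding is_inverse_def Hom_def by (simp add: split)
qed

lemma cokernel_joint_cancel:
  assumes ck: "is_cokernel C lam a" and a: "a \<in> Hom C Y X" and lam: "lam \<in> Hom C X L"
    and k: "k \<in> Hom C K X" and s: "s \<in> Hom C L K" and s_k_lam: "s\<cdot>k\<cdot>lam = Idm C L"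
    and f: "f \<in> Hom C X Z" and g: "g \<in> Hom C X Z" and "a\<cdot>f = a\<cdot>g" "k\<cdot>f = k\<cdot>g"
  shows "f = g"
proof -
  have [simp]: "a \<in> Arr C" "Dom C a = Y" "Cod C a = X" "lam \<in> Arr C" "Dom C lam = X" "Cod C lam = L"
    "k \<in> Arr C" "Dom C k = K" "Cod C k = X" "s \<in> Arr C" "Dom C s = L" "Cod C s = K"
    "f \<in> Arr C" "Dom C f = X" "Cod C f = Z" "g \<in> Arr C" "Dom C g = X" "Cod C g = Z"
    using a lam k s f g unfolding Hom_def by auto
  have [simp]: "Y \<in> Obj C" "K \<in> Obj C" "L \<in> Obj C" "Z \<in> Obj C"
    using dom_obj[of a] dom_obj[of k] cod_obj[of lam] cod_obj[of f] by simp_all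
  obtain n where [simp]: "n \<in> Arr C" "Dom C n = X" "Cod C n = Z" and g_n: "g \<oplus> n = Zero C X Z"
    using add_inverseE[of g] by auto
  have "a\<cdot>(f \<oplus> n) = a\<cdot>(g \<oplus> n)" by (simp add: \<open>a\<cdot>f = a\<cdot>g\<close>)
  also have "\<dots> = Zero C Y Z" by (simp only: g_n) simp
  finally have "\<exists>!c. c \<in> Hom C L Z \<and> f \<oplus> n = lam\<cdot>c"
    using cokernel_universal[OF ck, of "f \<oplus> n"] by simp
  then obtain c where c: "c \<in> Hom C L Z" and f_n: "f \<oplus> n = lam\<cdot>c" by blast
  have [simp]: "c \<in> Arr C" "Dom C c = L" "Cod C c = Z" using c unfolding Hom_def by auto
  have "k\<cdot>lam\<cdot>c = k\<cdot>(f \<oplus> n)" by (simp only: f_n)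
  also have "\<dots> = k\<cdot>(g \<oplus> n)" by (simp add: \<open>k\<cdot>f = k\<cdot>g\<close>)
  also have "\<dots> = Zero C K Z" by (simp only: g_n) simp
  finally have "c = Zero C L Z" using cmp_eq_extend[OF s_k_lam, of c] by simp
  then have "f \<oplus> n = g \<oplus> n" by (simp add: f_n g_n)
  then show ?thesis by (rule add_right_cancel[rotated 7]) simp_all
qed

context
  fixes a lam k s ui X L K
  assumes a: "a \<in> Hom C X X" and lam: "lam \<in> Hom C X L" and k: "k \<in> Hom C K X"
    and k_a: "k\<cdot>a = Zero C K X"
    and s: "is_inverse C (k\<cdot>lam) s" and ui: "is_inverse C (a\<cdot>a\<cdot>a\<cdot>a\<^sup>\<dagger> \<oplus> lam\<cdot>lam\<^sup>\<dagger>) ui"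
begin

lemma annihilator_types [simp]:
  "a \<in> Arr C" "Dom C a = X" "Cod C a = X" "lam \<in> Arr C" "Dom C lam = X" "Cod C lam = L"
  "k \<in> Arr C" "Dom C k = K" "Cod C k = X" "s \<in> Arr C" "Dom C s = L" "Cod C s = K"
  "ui \<in> Arr C" "Dom C ui = X" "Cod C ui = X" "X \<in> Obj C" "L \<in> Obj C" "K \<in> Obj C"
  using a lam k s ui dom_obj[of a] cod_obj[of lam] dom_obj[of k]
  unfolding is_inverse_def Hom_def by auto

lemma annihilator_identities:
  "k\<cdot>lam\<cdot>s = Idm C K" "s\<cdot>k\<cdot>lam = Idm C L"
  "(a\<cdot>a\<cdot>a\<cdot>a\<^sup>\<dagger> \<oplus> lam\<cdot>lam\<^sup>\<dagger>)\<cdot>ui = Idm C X" "ui\<cdot>(a\<cdot>a\<cdot>a\<cdot>a\<^sup>\<dagger> \<oplus> lam\<cdot>lam\<^sup>\<dagger>) = Idm C X"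
  using s ui unfolding is_inverse_def by simp_all

lemma annihilator_complement:
  assumes ck: "is_cokernel C lam a"
  shows "a\<cdot>a\<cdot>a\<^sup>\<dagger>\<cdot>ui\<cdot>a \<oplus> lam\<cdot>s\<cdot>k = Idm C X"
proof -
  note inv = annihilator_identities
  have a_lam: "a\<cdot>lam = Zero C X L" using cokernelD[OF ck] by simp
  have k_u: "k\<cdot>(a\<cdot>a\<cdot>a\<cdot>a\<^sup>\<dagger> \<oplus> lam\<cdot>lam\<^sup>\<dagger>) = k\<cdot>lam\<cdot>lam\<^sup>\<dagger>"
    using cmp_eq_extend[OF k_a, of "a\<cdot>a\<cdot>a\<^sup>\<dagger>"] by simp
  have s_k: "s\<cdot>k = lam\<^sup>\<dagger>\<cdot>ui"
  proof -
    have "s\<cdot>k = s\<cdot>k\<cdot>(a\<cdot>a\<cdot>a\<cdot>a\<^sup>\<dagger> \<oplus> lam\<cdot>lam\<^sup>\<dagger>)\<cdot>ui" by (simp add: inv)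
    also have "\<dots> = (s\<cdot>k\<cdot>lam)\<cdot>lam\<^sup>\<dagger>\<cdot>ui" using cmp_eq_extend[OF k_u, of ui] by simp
    finally show ?thesis by (simp add: inv)
  qed
  have sum: "a\<cdot>a\<cdot>a\<cdot>a\<^sup>\<dagger>\<cdot>ui \<oplus> lam\<cdot>s\<cdot>k = Idm C X"
    using inv(3) by (simp add: s_k)
  have "a = (a\<cdot>a\<cdot>a\<cdot>a\<^sup>\<dagger>\<cdot>ui \<oplus> lam\<cdot>s\<cdot>k)\<cdot>a" by (simp add: sum)
  then have a_eq: "a\<cdot>a\<cdot>a\<cdot>a\<^sup>\<dagger>\<cdot>ui\<cdot>a = a" by (simp add: k_a)
  show ?thesis
  proof (rule cokernel_joint_cancel[OF ck a lam k _ inv(2)])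
    show "a\<cdot>(a\<cdot>a\<cdot>a\<^sup>\<dagger>\<cdot>ui\<cdot>a \<oplus> lam\<cdot>s\<cdot>k) = a\<cdot>Idm C X"
      using cmp_eq_extend[OF a_lam, of "s\<cdot>k"] by (simp add: a_eq)
    show "k\<cdot>(a\<cdot>a\<cdot>a\<^sup>\<dagger>\<cdot>ui\<cdot>a \<oplus> lam\<cdot>s\<cdot>k) = k\<cdot>Idm C X"
      using cmp_eq_extend[OF k_a, of "a\<cdot>a\<^sup>\<dagger>\<cdot>ui\<cdot>a"] cmp_eq_extend[OF inv(1), of k] by simp
  qed (simp_all add: Hom_def)
qed

text \<open>The idempotent \<open>p = a\<^sup>\<dagger>\<cdot>ui\<cdot>a\<cdot>a\<cdot>a\<close> (which will be \<open>\<chi>\<cdot>a\<close>) fixes \<open>a\<^sup>\<dagger>\<close> on the right,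
  because \<open>a\<^sup>\<dagger>\<cdot>ui\<close> annihilates \<open>lam\<close>; taking adjoints gives \<open>p\<cdot>p\<^sup>\<dagger> = p\<close>.\<close>

lemma annihilator_self_adjoint:
  "(a\<^sup>\<dagger>\<cdot>ui\<cdot>a\<cdot>a\<cdot>a)\<^sup>\<dagger> = a\<^sup>\<dagger>\<cdot>ui\<cdot>a\<cdot>a\<cdot>a"
proof -
  note inv = annihilator_identities
  define p where "p = a\<^sup>\<dagger>\<cdot>ui\<cdot>a\<cdot>a\<cdot>a"
  have [simp]: "p \<in> Arr C" "Dom C p = X" "Cod C p = X" unfolding p_def by simp_all
  have k_a_star: "a\<^sup>\<dagger>\<cdot>k\<^sup>\<dagger> = Zero C X K" using arg_cong[OF k_a, of "Star C"] by simp
  have s_k_lam_star: "lam\<^sup>\<dagger>\<cdot>k\<^sup>\<dagger>\<cdot>s\<^sup>\<dagger> = Idm C L" using arg_cong[OF inv(2), of "Star C"] by simp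
  have "(a\<cdot>a\<cdot>a\<cdot>a\<^sup>\<dagger> \<oplus> lam\<cdot>lam\<^sup>\<dagger>)\<cdot>k\<^sup>\<dagger>\<cdot>s\<^sup>\<dagger> = lam"
    using cmp_eq_extend[OF k_a_star, of "s\<^sup>\<dagger>"] by (simp add: s_k_lam_star)
  then have "ui\<cdot>lam = k\<^sup>\<dagger>\<cdot>s\<^sup>\<dagger>"
    using cmp_eq_extend[OF inv(4), of "k\<^sup>\<dagger>\<cdot>s\<^sup>\<dagger>"] by simp
  then have ui_lam: "a\<^sup>\<dagger>\<cdot>ui\<cdot>lam = Zero C X L"
    using cmp_eq_extend[OF k_a_star, of "s\<^sup>\<dagger>"] by simp
  have "a\<^sup>\<dagger> = a\<^sup>\<dagger>\<cdot>(ui\<cdot>(a\<cdot>a\<cdot>a\<cdot>a\<^sup>\<dagger> \<oplus> lam\<cdot>lam\<^sup>\<dagger>))" by (simp only: inv(4)) simp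
  also have "\<dots> = p\<cdot>a\<^sup>\<dagger>"
    using cmp_eq_extend[OF ui_lam, of "lam\<^sup>\<dagger>"] by (simp add: p_def)
  finally have "a\<^sup>\<dagger>\<^sup>\<dagger> = (p\<cdot>a\<^sup>\<dagger>)\<^sup>\<dagger>" by (rule arg_cong)
  then have a_p: "a\<cdot>p\<^sup>\<dagger> = a" by simp
  have "p\<cdot>p\<^sup>\<dagger> = a\<^sup>\<dagger>\<cdot>ui\<cdot>a\<cdot>a\<cdot>a\<cdot>p\<^sup>\<dagger>" by (subst (1) p_def) simp
  also have "\<dots> = a\<^sup>\<dagger>\<cdot>ui\<cdot>a\<cdot>a\<cdot>a" by (simp add: a_p)
  also have "\<dots> = p" by (simp add: p_def)
  finally have "p\<^sup>\<dagger> = p" by (rule self_adjoint_if_cmp_star_eq[rotated 2]) simp_all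
  then show ?thesis unfolding p_def .
qed

lemma annihilator_dual_core_inverse:
  assumes ck: "is_cokernel C lam a"
  shows "is_dual_core_inverse C (a\<^sup>\<dagger>\<cdot>ui\<cdot>a\<cdot>a) a"
proof -
  have "a = (a\<cdot>a\<cdot>a\<^sup>\<dagger>\<cdot>ui\<cdot>a \<oplus> lam\<cdot>s\<cdot>k)\<cdot>a" by (simp add: annihilator_complement[OF ck])
  then have a_eq: "a\<cdot>a\<cdot>a\<^sup>\<dagger>\<cdot>ui\<cdot>a\<cdot>a = a" by (simp add: k_a)
  have "a\<^sup>\<dagger>\<cdot>a\<^sup>\<dagger>\<cdot>a\<^sup>\<dagger>\<cdot>ui\<^sup>\<dagger>\<cdot>a = a\<^sup>\<dagger>\<cdot>ui\<cdot>a\<cdot>a\<cdot>a"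
    using annihilator_self_adjoint by simp
  then show ?thesis
    using a_eq cmp_eq_extend[OF a_eq, of "a"] unfolding is_dual_core_inverse_def Hom_def by simp
qed

end

lemma dual_core_inverse_imp_kernel:
  assumes a: "a \<in> Hom C X X" and lam: "lam \<in> Hom C X L" and ck: "is_cokernel C lam a"
    and x: "is_dual_core_inverse C x a"
  shows "\<exists>k. is_kernel C k a \<and> invertible C (k\<cdot>lam) \<and> invertible C (a\<cdot>a\<cdot>a\<cdot>a\<^sup>\<dagger> \<oplus> lam\<cdot>lam\<^sup>\<dagger>)"
proof -
  obtain b where b: "b \<in> Hom C L X" and split: "a\<cdot>x \<oplus> lam\<cdot>b = Idm C X"
    and b_a: "b\<cdot>a = Zero C L X" and b_lam: "b\<cdot>lam = Idm C L"
    using dual_core_inverse_complement[OF a lam ck x] .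
  have kernel: "is_kernel C b a"
    using kernel_of_splitting[OF a dual_core_inverseD(1)[OF a x] lam b split b_a b_lam] .
  have [simp]: "a \<in> Arr C" "Dom C a = X" "Cod C a = X" "b \<in> Arr C" "Dom C b = L" "Cod C b = X"
    "lam \<in> Arr C" "Dom C lam = X" "Cod C lam = L" "L \<in> Obj C"
    using a b lam cod_obj[of lam] unfolding Hom_def by auto
  have "is_inverse C (b\<cdot>lam) (Idm C L)" unfolding is_inverse_def Hom_def b_lam by simp
  moreover have "is_inverse C (a\<cdot>a\<cdot>a\<cdot>a\<^sup>\<dagger> \<oplus> lam\<cdot>lam\<^sup>\<dagger>) (x\<^sup>\<dagger>\<cdot>x\<cdot>x\<cdot>x \<oplus> b\<^sup>\<dagger>\<cdot>b)"
    using cokernelD[OF ck] by (intro dual_core_sum_invertible[OF a x lam _ b split b_a b_lam]) simp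
  ultimately have "invertible C (b\<cdot>lam)" "invertible C (a\<cdot>a\<cdot>a\<cdot>a\<^sup>\<dagger> \<oplus> lam\<cdot>lam\<^sup>\<dagger>)"
    unfolding invertible_def by blast+
  with kernel show ?thesis by blast
qed

lemma kernel_imp_dual_core_inverse:
  assumes a: "a \<in> Hom C X X" and lam: "lam \<in> Hom C X L" and ck: "is_cokernel C lam a"
    and k: "is_kernel C k a" "invertible C (k\<cdot>lam)"
    and u: "invertible C (a\<cdot>a\<cdot>a\<cdot>a\<^sup>\<dagger> \<oplus> lam\<cdot>lam\<^sup>\<dagger>)"
  shows "is_dual_core_inverse C (a\<^sup>\<dagger>\<cdot>inverse_of C (a\<cdot>a\<cdot>a\<cdot>a\<^sup>\<dagger> \<oplus> lam\<cdot>lam\<^sup>\<dagger>)\<cdot>a\<cdot>a) a"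
proof -
  obtain s where s: "is_inverse C (k\<cdot>lam) s" using k(2) unfolding invertible_def by blast
  obtain ui where ui: "is_inverse C (a\<cdot>a\<cdot>a\<cdot>a\<^sup>\<dagger> \<oplus> lam\<cdot>lam\<^sup>\<dagger>) ui"
    using u unfolding invertible_def by blast
  have a_types: "a \<in> Arr C" "Dom C a = X" "Cod C a = X" using a unfolding Hom_def by auto
  have "k \<in> Hom C (Dom C k) X" "k\<cdot>a = Zero C (Dom C k) X"
    using k(1) a_types unfolding is_kernel_def Hom_def by simp_all
  from annihilator_dual_core_inverse[OF a lam this s ui ck] show ?thesis
    unfolding inverse_of_eqI[OF ui] .
qed

lemma dual_core_inverse_iff_kernel:
  assumes "a \<in> Hom C X X" "lam \<in> Hom C X L" "is_cokernel C lam a"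
  shows "(\<exists>x. is_dual_core_inverse C x a) \<longleftrightarrow>
    (\<exists>k. is_kernel C k a \<and> invertible C (k\<cdot>lam) \<and> invertible C (a\<cdot>a\<cdot>a\<cdot>a\<^sup>\<dagger> \<oplus> lam\<cdot>lam\<^sup>\<dagger>))"
  using dual_core_inverse_imp_kernel[OF assms] kernel_imp_dual_core_inverse[OF assms] by blast

lemma dual_core_eq:
  assumes "a \<in> Hom C X X" "lam \<in> Hom C X L" "is_cokernel C lam a" "is_dual_core_inverse C x a"
  shows "dual_core C a = a\<^sup>\<dagger>\<cdot>inverse_of C (a\<cdot>a\<cdot>a\<cdot>a\<^sup>\<dagger> \<oplus> lam\<cdot>lam\<^sup>\<dagger>)\<cdot>a\<cdot>a"
  using dual_core_inverse_imp_kernel[OF assms] kernel_imp_dual_core_inverse[OF assms(1-3)]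
    dual_core_eqI[OF assms(1)] by blast

end

theorem theorem2p4:
  fixes C :: "('o, 'm) icat" and \<phi> lam :: 'm and X L :: 'o
  assumes "is_additive_inv_cat C"
    and "\<phi> \<in> Hom C X X"
    and "lam \<in> Hom C X L"
    and "is_cokernel C lam \<phi>"
  shows "((\<exists>\<chi>. is_dual_core_inverse C \<chi> \<phi>) \<longleftrightarrow>
           (\<exists>\<kappa>. is_kernel C \<kappa> \<phi> \<and> invertible C (Cmp C \<kappa> lam) \<and>
              invertible C (Add C (Cmp C (Cmp C \<phi> (Cmp C \<phi> \<phi>)) (Star C \<phi>))
                                  (Cmp C lam (Star C lam))))) \<and>
         ((\<exists>\<chi>. is_dual_core_inverse C \<chi> \<phi>) \<longrightarrow>
           dual_core C \<phi> =
             Cmp C (Cmp C (Star C \<phi>)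
               (inverse_of C (Add C (Cmp C (Cmp C \<phi> (Cmp C \<phi> \<phi>)) (Star C \<phi>))
                                    (Cmp C lam (Star C lam)))))
               (Cmp C \<phi> \<phi>))"
proof -
  interpret additive_inv_cat C by (rule additive_inv_cat.intro) (fact assms(1))
  have [simp]: "\<phi> \<in> Arr C" "Dom C \<phi> = X" "Cod C \<phi> = X" "lam \<in> Arr C" "Dom C lam = X" "Cod C lam = L"
    using assms(2,3) unfolding Hom_def by auto
  let ?u = "\<phi>\<cdot>\<phi>\<cdot>\<phi>\<cdot>\<phi>\<^sup>\<dagger> \<oplus> lam\<cdot>lam\<^sup>\<dagger>"
  have u: "Add C (Cmp C (Cmp C \<phi> (Cmp C \<phi> \<phi>)) (Star C \<phi>)) (Cmp C lam (Star C lam)) = ?u" by simp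
  have "dual_core C \<phi> = (\<phi>\<^sup>\<dagger>\<cdot>inverse_of C ?u)\<cdot>\<phi>\<cdot>\<phi>" if "is_dual_core_inverse C \<chi> \<phi>" for \<chi>
  proof -
    have "invertible C ?u" using that dual_core_inverse_iff_kernel[OF assms(2-4)] by blast
    then have "inverse_of C ?u \<in> Hom C X X" using inverse_of_hom[of ?u] by simp
    then show ?thesis using dual_core_eq[OF assms(2-4) that] unfolding Hom_def by simp
  qed
  then show ?thesis unfolding u using dual_core_inverse_iff_kernel[OF assms(2-4)] by blast
qed

end
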